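(* Let $\mathbb{E}$ be a finitely complete category, $\Sigma$ a fibrational class of split epimorphisms, and suppose $\mathbb{E}$ is a $\Sigma$-Mal'tsev category. If a monomorphism $m\colon U\rightarrowtail X$ is normal to a $\Sigma$-equivalence relation $S$ on $X$, then the object $U$ is $\Sigma$-special. If moreover $\mathbb{E}$ is $\Sigma$-protomodular, then a monomorphism $m$ is normal to at most one $\Sigma$-equivalence relation.
   Context: A split epimorphism is a pair $(f,s)$ with $fs=1$. A class $\Sigma$ of split epimorphisms is fibrational if it contains all split epimorphisms $(f,s)$ with $f$ invertible and is stable under pullback along any morphism. A pair of morphisms with common codomain $Z$ is jointly extremally epic if it factors jointly through no non-invertible monomorphism into $Z$. $\mathbb{E}$ is $\Sigma$-Mal'tsev if for every split epimorphism $(f,s)\colon X\rightleftarrows Y$ in $\Sigma$ and every split epimorphism $(g,t)$ with $g\colon Y'\to Y$, letting $X'=Y'\times_YX$, $s'=(1_{Y'},sg)$, $\bar t=(tf,1_X)$, the pair $(s',\bar t)$ is jointly extremally epic. A $\Sigma$-relation is a reflexive relation $(d_0,d_1)\colon S\rightarrowtail X\times X$ with reflexivity $s_0$ such that $(d_0,s_0)\in\Sigma$; a $\Sigma$-equivalence relation is an equivalence relation which is a $\Sigma$-relation. An object $U$ is $\Sigma$-special when the kernel relation of $U\to 1$, namely $U\times U$ with its projections and the diagonal, is a $\Sigma$-relation. A monomorphism $m\colon U\rightarrowtail X$ is normal to an equivalence relation $S$ on $X$ when $m^{-1}(S)=U\times U$ (the indiscrete relation) and both commutative squares $d_i^S\circ\tilde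 m=m\circ p_i$ ($i=0,1$), where $\tilde m\colon U\times U\to S$ is the induced morphism, are pullbacks. A split epimorphism $(f,s)\colon X\rightleftarrows Y$ is strongly split when for every morphism $y\colon\bar Y\to Y$, with $x\colon\bar Y\times_YX\to X$ the pullback projection, the pair $(x,s)$ is jointly extremally epic; $\mathbb{E}$ is $\Sigma$-protomodular when every split epimorphism in $\Sigma$ is strongly split. *)

theory Defs
  imports Main
begin

text \<open>A category whose objects are all elements of type 'o and arrows all elements of 'a.
  cmp g f is the composite g after f (meaningful when cod f = dom g).\<close>
record ('o,'a) cat =
  cdom :: "'a \<Rightarrow> 'o"
  ccod :: "'a \<Rightarrow> 'o"
  idm  :: "'o \<Rightarrow> 'a"
  cmp  :: "'a \<Rightarrow> 'a \<Rightarrow> 'a"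

definition is_category :: "('o,'a) cat \<Rightarrow> bool" where
  "is_category C \<longleftrightarrow>
     (\<forall>A. cdom C (idm C A) = A \<and> ccod C (idm C A) = A) \<and>
     (\<forall>f g. ccod C f = cdom C g \<longrightarrow>
        cdom C (cmp C g f) = cdom C f \<and> ccod C (cmp C g f) = ccod C g) \<and>
     (\<forall>f. cmp C f (idm C (cdom C f)) = f \<and> cmp C (idm C (ccod C f)) f = f) \<and>
     (\<forall>f g h. ccod C f = cdom C g \<and> ccod C g = cdom C h \<longrightarrow>
        cmp C h (cmp C g f) = cmp C (cmp C h g) f)"

definition hom :: "('o,'a) cat \<Rightarrow> 'a \<Rightarrow> 'o \<Rightarrow> 'o \<Rightarrow> bool" where
  "hom C f A B \<longleftrightarrow> cdom C f = A \<and> ccod C f = B"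

definition mono :: "('o,'a) cat \<Rightarrow> 'a \<Rightarrow> bool" where
  "mono C m \<longleftrightarrow> (\<forall>g h. ccod C g = cdom C m \<and> ccod C h = cdom C m \<and> cdom C g = cdom C h
      \<and> cmp C m g = cmp C m h \<longrightarrow> g = h)"

definition iso :: "('o,'a) cat \<Rightarrow> 'a \<Rightarrow> bool" where
  "iso C f \<longleftrightarrow> (\<exists>g. hom C g (ccod C f) (cdom C f) \<and>
      cmp C g f = idm C (cdom C f) \<and> cmp C f g = idm C (ccod C f))"

definition is_pullback :: "('o,'a) cat \<Rightarrow> 'a \<Rightarrow> 'a \<Rightarrow> 'a \<Rightarrow> 'a \<Rightarrow> bool" where
  "is_pullback C f g a b \<longleftrightarrow>
     ccod C f = ccod C g \<and> ccod C a = cdom C f \<and> ccod C b = cdom C g \<and>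
     cdom C a = cdom C b \<and> cmp C f a = cmp C g b \<and>
     (\<forall>x y. ccod C x = cdom C f \<and> ccod C y = cdom C g \<and> cdom C x = cdom C y \<and>
            cmp C f x = cmp C g y \<longrightarrow>
        (\<exists>!u. hom C u (cdom C x) (cdom C a) \<and> cmp C a u = x \<and> cmp C b u = y))"

definition is_product :: "('o,'a) cat \<Rightarrow> 'a \<Rightarrow> 'a \<Rightarrow> bool" where
  "is_product C p0 p1 \<longleftrightarrow> cdom C p0 = cdom C p1 \<and>
     (\<forall>x y. cdom C x = cdom C y \<and> ccod C x = ccod C p0 \<and> ccod C y = ccod C p1 \<longrightarrow>
        (\<exists>!u. hom C u (cdom C x) (cdom C p0) \<and> cmp C p0 u = x \<and> cmp C p1 u = y))"

definition terminal :: "('o,'a) cat \<Rightarrow> 'o \<Rightarrow> bool" where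
  "terminal C T \<longleftrightarrow> (\<forall>A. \<exists>!f. hom C f A T)"

definition finitely_complete :: "('o,'a) cat \<Rightarrow> bool" where
  "finitely_complete C \<longleftrightarrow> (\<exists>T. terminal C T) \<and>
     (\<forall>f g. ccod C f = ccod C g \<longrightarrow> (\<exists>a b. is_pullback C f g a b))"

definition split_epi :: "('o,'a) cat \<Rightarrow> 'a \<Rightarrow> 'a \<Rightarrow> bool" where
  "split_epi C f s \<longleftrightarrow> hom C s (ccod C f) (cdom C f) \<and> cmp C f s = idm C (ccod C f)"

definition class_of_split_epis :: "('o,'a) cat \<Rightarrow> ('a \<times> 'a) set \<Rightarrow> bool" where
  "class_of_split_epis C \<Sigma> \<longleftrightarrow> (\<forall>(f,s)\<in>\<Sigma>. split_epi C f s)"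

definition fibrational :: "('o,'a) cat \<Rightarrow> ('a \<times> 'a) set \<Rightarrow> bool" where
  "fibrational C \<Sigma> \<longleftrightarrow>
     (\<forall>f s. split_epi C f s \<and> iso C f \<longrightarrow> (f,s) \<in> \<Sigma>) \<and>
     (\<forall>f s g q p s'. (f,s) \<in> \<Sigma> \<and> ccod C g = ccod C f \<and> is_pullback C f g q p \<and>
        hom C s' (cdom C g) (cdom C p) \<and> cmp C p s' = idm C (cdom C g) \<and>
        cmp C q s' = cmp C s g \<longrightarrow> (p, s') \<in> \<Sigma>)"

definition jointly_extremally_epic :: "('o,'a) cat \<Rightarrow> 'a \<Rightarrow> 'a \<Rightarrow> bool" where
  "jointly_extremally_epic C a b \<longleftrightarrow> ccod C a = ccod C b \<and>
     (\<forall>m a' b'. mono C m \<and> ccod C m = ccod C a \<and>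
        hom C a' (cdom C a) (cdom C m) \<and> hom C b' (cdom C b) (cdom C m) \<and>
        cmp C m a' = a \<and> cmp C m b' = b \<longrightarrow> iso C m)"

definition sigma_maltsev :: "('o,'a) cat \<Rightarrow> ('a \<times> 'a) set \<Rightarrow> bool" where
  "sigma_maltsev C \<Sigma> \<longleftrightarrow>
     (\<forall>f s g t q p s' tb. (f,s) \<in> \<Sigma> \<and> split_epi C g t \<and> ccod C g = ccod C f \<and>
        is_pullback C f g q p \<and>
        hom C s' (cdom C g) (cdom C p) \<and> cmp C p s' = idm C (cdom C g) \<and>
        cmp C q s' = cmp C s g \<and>
        hom C tb (cdom C f) (cdom C p) \<and> cmp C p tb = cmp C t f \<and>
        cmp C q tb = idm C (cdom C f)
        \<longrightarrow> jointly_extremally_epic C s' tb)"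

text \<open>A relation (d0,d1) : S \<rightarrowtail> X \<times> X is represented by a jointly monic span.\<close>
definition reflexive_relation :: "('o,'a) cat \<Rightarrow> 'o \<Rightarrow> 'a \<Rightarrow> 'a \<Rightarrow> 'a \<Rightarrow> bool" where
  "reflexive_relation C X d0 d1 s0 \<longleftrightarrow>
     cdom C d0 = cdom C d1 \<and> ccod C d0 = X \<and> ccod C d1 = X \<and>
     (\<forall>g h. ccod C g = cdom C d0 \<and> ccod C h = cdom C d0 \<and> cdom C g = cdom C h \<and>
        cmp C d0 g = cmp C d0 h \<and> cmp C d1 g = cmp C d1 h \<longrightarrow> g = h) \<and>
     hom C s0 X (cdom C d0) \<and> cmp C d0 s0 = idm C X \<and> cmp C d1 s0 = idm C X"

definition equivalence_relation :: "('o,'a) cat \<Rightarrow> 'o \<Rightarrow> 'a \<Rightarrow> 'a \<Rightarrow> 'a \<Rightarrow> bool" where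
  "equivalence_relation C X d0 d1 s0 \<longleftrightarrow>
     reflexive_relation C X d0 d1 s0 \<and>
     (\<exists>\<sigma>. hom C \<sigma> (cdom C d0) (cdom C d0) \<and> cmp C d0 \<sigma> = d1 \<and> cmp C d1 \<sigma> = d0) \<and>
     (\<forall>a b. is_pullback C d1 d0 a b \<longrightarrow>
        (\<exists>\<tau>. hom C \<tau> (cdom C a) (cdom C d0) \<and> cmp C d0 \<tau> = cmp C d0 a \<and>
             cmp C d1 \<tau> = cmp C d1 b))"

definition sigma_relation :: "('o,'a) cat \<Rightarrow> ('a \<times> 'a) set \<Rightarrow> 'o \<Rightarrow> 'a \<Rightarrow> 'a \<Rightarrow> 'a \<Rightarrow> bool" where
  "sigma_relation C \<Sigma> X d0 d1 s0 \<longleftrightarrow> reflexive_relation C X d0 d1 s0 \<and> (d0, s0) \<in> \<Sigma>"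

definition sigma_equivalence_relation ::
  "('o,'a) cat \<Rightarrow> ('a \<times> 'a) set \<Rightarrow> 'o \<Rightarrow> 'a \<Rightarrow> 'a \<Rightarrow> 'a \<Rightarrow> bool" where
  "sigma_equivalence_relation C \<Sigma> X d0 d1 s0 \<longleftrightarrow>
     equivalence_relation C X d0 d1 s0 \<and> sigma_relation C \<Sigma> X d0 d1 s0"

text \<open>U is \<Sigma>-special: the kernel relation of U \<rightarrow> 1, i.e. U \<times> U with its projections
  and the diagonal, is a \<Sigma>-relation (for a/any choice of the product).\<close>
definition sigma_special :: "('o,'a) cat \<Rightarrow> ('a \<times> 'a) set \<Rightarrow> 'o \<Rightarrow> bool" where
  "sigma_special C \<Sigma> U \<longleftrightarrow>
     (\<forall>p0 p1 \<delta>. is_product C p0 p1 \<and> ccod C p0 = U \<and> ccod C p1 = U \<and>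
        hom C \<delta> U (cdom C p0) \<and> cmp C p0 \<delta> = idm C U \<and> cmp C p1 \<delta> = idm C U
        \<longrightarrow> sigma_relation C \<Sigma> U p0 p1 \<delta>)"

text \<open>m : U \<rightarrowtail> X normal to the relation (d0,d1) on X: the inverse image of S along
  m \<times> m is all of U \<times> U (i.e. there is mt : U \<times> U \<rightarrow> S with d_i mt = m p_i) and both
  squares d_i \<circ> mt = m \<circ> p_i are pullbacks.\<close>
definition normal_to :: "('o,'a) cat \<Rightarrow> 'a \<Rightarrow> 'a \<Rightarrow> 'a \<Rightarrow> bool" where
  "normal_to C m d0 d1 \<longleftrightarrow> mono C m \<and> ccod C m = ccod C d0 \<and>
     (\<exists>p0 p1 mt. is_product C p0 p1 \<and> ccod C p0 = cdom C m \<and> ccod C p1 = cdom C m \<and>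
        hom C mt (cdom C p0) (cdom C d0) \<and>
        cmp C d0 mt = cmp C m p0 \<and> cmp C d1 mt = cmp C m p1 \<and>
        is_pullback C d0 m mt p0 \<and> is_pullback C d1 m mt p1)"

definition strongly_split :: "('o,'a) cat \<Rightarrow> 'a \<Rightarrow> 'a \<Rightarrow> bool" where
  "strongly_split C f s \<longleftrightarrow>
     (\<forall>y x x'. ccod C y = ccod C f \<and> is_pullback C f y x x' \<longrightarrow>
        jointly_extremally_epic C x s)"

definition sigma_protomodular :: "('o,'a) cat \<Rightarrow> ('a \<times> 'a) set \<Rightarrow> bool" where
  "sigma_protomodular C \<Sigma> \<longleftrightarrow> (\<forall>(f,s)\<in>\<Sigma>. strongly_split C f s)"

end

theory Submission
  imports Defs
begin

text \<open>A monomorphism m : U \<rightarrowtail> X normal to S exhibits U \<times> U, with its first projection and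
  the diagonal, as the pullback of the split epimorphism (d0, s0) along m, so fibrationality puts it
  into \<Sigma>.  If S and T are
  both normal to m, the intersection S \<inter> T is a subobject of S through which both U \<times> U \<rightarrow> S and
  the reflexivity s0 factor; when (d0, s0) is strongly split these two arrows are jointly
  extremally epic, so S \<inter> T = S, i.e. S \<le> T, and by symmetry S \<cong> T.\<close>

definition jointly_monic :: "('o,'a) cat \<Rightarrow> 'a \<Rightarrow> 'a \<Rightarrow> bool" where
  "jointly_monic C f g \<longleftrightarrow>
     (\<forall>x y. ccod C x = cdom C f \<and> ccod C y = cdom C f \<and> cdom C x = cdom C y \<and>
        cmp C f x = cmp C f y \<and> cmp C g x = cmp C g y \<longrightarrow> x = y)"

lemma jointly_monicD:
  "jointly_monic C f g \<Longrightarrow> ccod C x = cdom C f \<Longrightarrow> ccod C y = cdom C f \<Longrightarrow>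
    cdom C x = cdom C y \<Longrightarrow> cmp C f x = cmp C f y \<Longrightarrow> cmp C g x = cmp C g y \<Longrightarrow> x = y"
  unfolding jointly_monic_def by blast

lemma reflexive_relation_jointly_monic:
  "reflexive_relation C X d0 d1 s0 \<Longrightarrow> jointly_monic C d0 d1"
  unfolding reflexive_relation_def jointly_monic_def by blast

lemma pullback_factor:
  assumes "is_pullback C f g a b" "ccod C x = cdom C f" "ccod C y = cdom C g"
    "cdom C x = cdom C y" "cmp C f x = cmp C g y"
  shows "\<exists>u. hom C u (cdom C x) (cdom C a) \<and> cmp C a u = x \<and> cmp C b u = y"
  using assms unfolding is_pullback_def by blast

lemma product_pairing:
  assumes "is_product C p0 p1" "cdom C x = cdom C y" "ccod C x = ccod C p0" "ccod C y = ccod C p1"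
  shows "\<exists>u. hom C u (cdom C x) (cdom C p0) \<and> cmp C p0 u = x \<and> cmp C p1 u = y"
  using assms unfolding is_product_def by metis

locale category =
  fixes C :: "('o,'a) cat"
  assumes is_category: "is_category C"
begin

lemma dom_id [simp]: "cdom C (idm C A) = A" and cod_id [simp]: "ccod C (idm C A) = A"
  using is_category unfolding is_category_def by auto

lemma dom_comp [simp]: "ccod C f = cdom C g \<Longrightarrow> cdom C (cmp C g f) = cdom C f"
  and cod_comp [simp]: "ccod C f = cdom C g \<Longrightarrow> ccod C (cmp C g f) = ccod C g"
  using is_category unfolding is_category_def by auto

lemma comp_id [simp]: "cdom C f = A \<Longrightarrow> cmp C f (idm C A) = f"
  and id_comp [simp]: "ccod C f = A \<Longrightarrow> cmp C (idm C A) f = f"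
  using is_category unfolding is_category_def by auto

lemma comp_assoc:
  "ccod C f = cdom C g \<Longrightarrow> ccod C g = cdom C h \<Longrightarrow>
    cmp C h (cmp C g f) = cmp C (cmp C h g) f"
  using is_category unfolding is_category_def by auto

lemma product_jointly_monic:
  assumes "is_product C p0 p1"
  shows "jointly_monic C p0 p1"
  unfolding jointly_monic_def
proof (intro allI impI)
  fix x y
  assume H: "ccod C x = cdom C p0 \<and> ccod C y = cdom C p0 \<and> cdom C x = cdom C y \<and>
    cmp C p0 x = cmp C p0 y \<and> cmp C p1 x = cmp C p1 y"
  have "cdom C p0 = cdom C p1" using assms unfolding is_product_def by blast
  then have "\<exists>!u. hom C u (cdom C x) (cdom C p0) \<and> cmp C p0 u = cmp C p0 x \<and> cmp C p1 u = cmp C p1 x"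
    using assms[unfolded is_product_def, THEN conjunct2, rule_format, of "cmp C p0 x" "cmp C p1 x"] H
    by simp
  then show "x = y" using H by (auto simp: hom_def)
qed

lemma product_pairing_mono:
  assumes jm: "jointly_monic C d0 d1" and p: "is_product C p0 p1"
    and k: "hom C k (cdom C d0) (cdom C p0)" "cmp C p0 k = d0" "cmp C p1 k = d1"
  shows "mono C k"
  unfolding mono_def
proof (intro allI impI)
  fix g h assume H: "ccod C g = cdom C k \<and> ccod C h = cdom C k \<and> cdom C g = cdom C h \<and>
    cmp C k g = cmp C k h"
  have "cdom C p0 = cdom C p1" using p unfolding is_product_def by blast
  then have "cmp C d0 g = cmp C d0 h" "cmp C d1 g = cmp C d1 h"
    using H k by (metis comp_assoc hom_def)+
  then show "g = h" using jointly_monicD[OF jm] H k by (simp add: hom_def)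
qed

lemma pullback_jointly_monic:
  assumes pb: "is_pullback C f g a b"
  shows "jointly_monic C a b"
  unfolding jointly_monic_def
proof (intro allI impI)
  fix x y
  assume H: "ccod C x = cdom C a \<and> ccod C y = cdom C a \<and> cdom C x = cdom C y \<and>
    cmp C a x = cmp C a y \<and> cmp C b x = cmp C b y"
  have B: "ccod C a = cdom C f" "ccod C b = cdom C g" "cdom C a = cdom C b"
    "cmp C f a = cmp C g b"
    using pb unfolding is_pullback_def by auto
  let ?x = "cmp C a x" and ?y = "cmp C b x"
  have U: "\<And>x y. ccod C x = cdom C f \<Longrightarrow> ccod C y = cdom C g \<Longrightarrow> cdom C x = cdom C y \<Longrightarrow>
      cmp C f x = cmp C g y \<Longrightarrow>
      \<exists>!u. hom C u (cdom C x) (cdom C a) \<and> cmp C a u = x \<and> cmp C b u = y"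
    using pb unfolding is_pullback_def by blast
  have "cmp C f ?x = cmp C g ?y" using H B by (metis comp_assoc)
  then have "\<exists>!u. hom C u (cdom C ?x) (cdom C a) \<and> cmp C a u = ?x \<and> cmp C b u = ?y"
    by (intro U) (use H B in auto)
  then show "x = y" using H B by (auto simp: hom_def)
qed

lemma pullback_mono:
  assumes pb: "is_pullback C f g a b" and g: "mono C g"
  shows "mono C a"
  unfolding mono_def
proof (intro allI impI)
  fix x y assume H: "ccod C x = cdom C a \<and> ccod C y = cdom C a \<and> cdom C x = cdom C y \<and>
    cmp C a x = cmp C a y"
  have B: "ccod C a = cdom C f" "ccod C b = cdom C g" "cdom C a = cdom C b"
    "cmp C f a = cmp C g b"
    using pb unfolding is_pullback_def by auto
  have "cmp C g (cmp C b x) = cmp C g (cmp C b y)"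
    using H B by (metis comp_assoc)
  then have "cmp C b x = cmp C b y"
    using g H B unfolding mono_def by simp
  then show "x = y" using jointly_monicD[OF pullback_jointly_monic[OF pb]] H by blast
qed

lemma products_iso:
  assumes p: "is_product C p0 p1" and q: "is_product C q0 q1"
    and "ccod C p0 = ccod C q0" "ccod C p1 = ccod C q1"
  shows "\<exists>\<psi> \<psi>'. hom C \<psi> (cdom C q0) (cdom C p0) \<and> cmp C p0 \<psi> = q0 \<and> cmp C p1 \<psi> = q1 \<and>
     hom C \<psi>' (cdom C p0) (cdom C q0) \<and>
     cmp C \<psi> \<psi>' = idm C (cdom C p0) \<and> cmp C \<psi>' \<psi> = idm C (cdom C q0)"
proof -
  have dp: "cdom C p0 = cdom C p1" and dq: "cdom C q0 = cdom C q1"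
    using p q unfolding is_product_def by auto
  obtain \<psi> where \<psi>: "hom C \<psi> (cdom C q0) (cdom C p0)" "cmp C p0 \<psi> = q0" "cmp C p1 \<psi> = q1"
    using product_pairing[OF p, of q0 q1] dq assms by auto
  obtain \<psi>' where \<psi>': "hom C \<psi>' (cdom C p0) (cdom C q0)" "cmp C q0 \<psi>' = p0" "cmp C q1 \<psi>' = p1"
    using product_pairing[OF q, of p0 p1] dp assms by auto
  have "cmp C \<psi> \<psi>' = idm C (cdom C p0)"
    by (rule jointly_monicD[OF product_jointly_monic[OF p]])
      (use \<psi> \<psi>' dp in \<open>auto simp: hom_def comp_assoc\<close>)
  moreover have "cmp C \<psi>' \<psi> = idm C (cdom C q0)"
    by (rule jointly_monicD[OF product_jointly_monic[OF q]])
      (use \<psi> \<psi>' dq in \<open>auto simp: hom_def comp_assoc\<close>)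
  ultimately show ?thesis using \<psi> \<psi>' by blast
qed

lemma pullback_comp_iso:
  assumes pb: "is_pullback C f g a b"
    and \<phi>: "hom C \<phi> P (cdom C a)" and \<phi>': "hom C \<phi>' (cdom C a) P"
    and inv: "cmp C \<phi> \<phi>' = idm C (cdom C a)" "cmp C \<phi>' \<phi> = idm C P"
  shows "is_pullback C f g (cmp C a \<phi>) (cmp C b \<phi>)"
proof -
  have B: "ccod C f = ccod C g" "ccod C a = cdom C f" "ccod C b = cdom C g"
     "cdom C a = cdom C b" "cmp C f a = cmp C g b"
    using pb unfolding is_pullback_def by auto
  have jm: "jointly_monic C a b" by (rule pullback_jointly_monic[OF pb])
  show ?thesis unfolding is_pullback_def
  proof (intro conjI allI impI)
    show "cmp C f (cmp C a \<phi>) = cmp C g (cmp C b \<phi>)"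
      using B \<phi> by (simp add: hom_def comp_assoc)
    fix x y assume H: "ccod C x = cdom C f \<and> ccod C y = cdom C g \<and> cdom C x = cdom C y \<and>
      cmp C f x = cmp C g y"
    then obtain v where v: "hom C v (cdom C x) (cdom C a)" "cmp C a v = x" "cmp C b v = y"
      using pullback_factor[OF pb] by blast
    show "\<exists>!u. hom C u (cdom C x) (cdom C (cmp C a \<phi>)) \<and>
        cmp C (cmp C a \<phi>) u = x \<and> cmp C (cmp C b \<phi>) u = y"
    proof (rule ex1I[where a = "cmp C \<phi>' v"])
      show "hom C (cmp C \<phi>' v) (cdom C x) (cdom C (cmp C a \<phi>)) \<and>
          cmp C (cmp C a \<phi>) (cmp C \<phi>' v) = x \<and> cmp C (cmp C b \<phi>) (cmp C \<phi>' v) = y"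
        using \<phi> \<phi>' v B inv by (simp add: hom_def comp_assoc[symmetric]) (simp add: comp_assoc)
    next
      fix w assume W: "hom C w (cdom C x) (cdom C (cmp C a \<phi>)) \<and>
          cmp C (cmp C a \<phi>) w = x \<and> cmp C (cmp C b \<phi>) w = y"
      have "cmp C \<phi> w = v"
        by (rule jointly_monicD[OF jm]) (use W \<phi> v B in \<open>auto simp: hom_def comp_assoc\<close>)
      then have "cmp C \<phi>' (cmp C \<phi> w) = cmp C \<phi>' v" by simp
      then show "w = cmp C \<phi>' v"
        using W \<phi> \<phi>' inv B by (simp add: hom_def comp_assoc)
    qed
  qed (use B \<phi> in \<open>auto simp: hom_def\<close>)
qed

lemma finitely_complete_has_products:
  assumes "finitely_complete C"
  shows "\<exists>p0 p1. is_product C p0 p1 \<and> ccod C p0 = X \<and> ccod C p1 = X"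
proof -
  obtain T where T: "terminal C T" using assms unfolding finitely_complete_def by blast
  obtain t where t: "hom C t X T" using T unfolding terminal_def by metis
  obtain a b where pb: "is_pullback C t t a b"
    using assms t unfolding finitely_complete_def hom_def by metis
  have B: "ccod C a = X" "ccod C b = X" "cdom C a = cdom C b"
    using pb t unfolding is_pullback_def hom_def by auto
  have "is_product C a b" unfolding is_product_def
  proof (intro conjI allI impI)
    fix x y assume H: "cdom C x = cdom C y \<and> ccod C x = ccod C a \<and> ccod C y = ccod C b"
    have "cmp C t x = cmp C t y"
      using T H t B unfolding terminal_def hom_def by (metis cod_comp dom_comp)
    then show "\<exists>!u. hom C u (cdom C x) (cdom C a) \<and> cmp C a u = x \<and> cmp C b u = y"
      using pb H t B unfolding is_pullback_def hom_def by auto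
  qed (fact B)
  then show ?thesis using B by blast
qed

lemma normal_to_product:
  assumes n: "normal_to C m d0 d1" and q: "is_product C q0 q1"
    and "ccod C q0 = cdom C m" "ccod C q1 = cdom C m"
  shows "\<exists>mt. hom C mt (cdom C q0) (cdom C d0) \<and>
    cmp C d0 mt = cmp C m q0 \<and> cmp C d1 mt = cmp C m q1 \<and> is_pullback C d0 m mt q0"
proof -
  obtain p0 p1 mt where p: "is_product C p0 p1" "ccod C p0 = cdom C m" "ccod C p1 = cdom C m"
    and mt: "hom C mt (cdom C p0) (cdom C d0)"
      "cmp C d0 mt = cmp C m p0" "cmp C d1 mt = cmp C m p1"
    and pb: "is_pullback C d0 m mt p0" and pb1: "is_pullback C d1 m mt p1"
    using n unfolding normal_to_def by blast
  have dp: "cdom C p0 = cdom C p1" using p unfolding is_product_def by blast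
  have d1: "ccod C mt = cdom C d1" using pb1 unfolding is_pullback_def by blast
  obtain \<psi> \<psi>' where \<psi>: "hom C \<psi> (cdom C q0) (cdom C p0)" "cmp C p0 \<psi> = q0" "cmp C p1 \<psi> = q1"
      "hom C \<psi>' (cdom C p0) (cdom C q0)"
      "cmp C \<psi> \<psi>' = idm C (cdom C p0)" "cmp C \<psi>' \<psi> = idm C (cdom C q0)"
    using products_iso[OF p(1) q] p assms by metis
  have "is_pullback C d0 m (cmp C mt \<psi>) (cmp C p0 \<psi>)"
    by (rule pullback_comp_iso[OF pb]) (use \<psi> mt in \<open>simp_all add: hom_def\<close>)
  moreover have "cmp C d0 (cmp C mt \<psi>) = cmp C m q0"
  proof -
    have "cmp C d0 (cmp C mt \<psi>) = cmp C (cmp C m p0) \<psi>"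
      using \<psi> mt by (simp add: hom_def comp_assoc)
    also have "\<dots> = cmp C m q0"
      using \<psi> p by (simp add: hom_def comp_assoc[symmetric])
    finally show ?thesis .
  qed
  moreover have "cmp C d1 (cmp C mt \<psi>) = cmp C m q1"
  proof -
    have "cmp C d1 (cmp C mt \<psi>) = cmp C (cmp C m p1) \<psi>"
      using \<psi> mt d1 by (simp add: hom_def comp_assoc)
    also have "\<dots> = cmp C m q1"
      using \<psi> p dp by (simp add: hom_def comp_assoc[symmetric])
    finally show ?thesis .
  qed
  ultimately show ?thesis using \<psi> mt by (intro exI[of _ "cmp C mt \<psi>"]) (simp add: hom_def)
qed

lemma product_diagonal_reflexive_relation:
  assumes "is_product C q0 q1" "ccod C q0 = U" "ccod C q1 = U" "hom C \<delta> U (cdom C q0)"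
    "cmp C q0 \<delta> = idm C U" "cmp C q1 \<delta> = idm C U"
  shows "reflexive_relation C U q0 q1 \<delta>"
  using assms product_jointly_monic[OF assms(1)]
  unfolding reflexive_relation_def jointly_monic_def is_product_def by blast

lemma normal_sigma_relation_special:
  assumes fib: "fibrational C \<Sigma>" and S: "sigma_relation C \<Sigma> X d0 d1 s0"
    and n: "normal_to C m d0 d1"
  shows "sigma_special C \<Sigma> (cdom C m)"
  unfolding sigma_special_def
proof (intro allI impI)
  fix q0 q1 \<delta>
  assume Q: "is_product C q0 q1 \<and> ccod C q0 = cdom C m \<and> ccod C q1 = cdom C m \<and>
    hom C \<delta> (cdom C m) (cdom C q0) \<and> cmp C q0 \<delta> = idm C (cdom C m) \<and> cmp C q1 \<delta> = idm C (cdom C m)"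
  have rS: "reflexive_relation C X d0 d1 s0" and inS: "(d0, s0) \<in> \<Sigma>"
    using S unfolding sigma_relation_def by blast+
  have Sd: "cdom C d0 = cdom C d1" "ccod C d0 = X" "ccod C d1 = X" "hom C s0 X (cdom C d0)"
     "cmp C d0 s0 = idm C X" "cmp C d1 s0 = idm C X"
    using rS unfolding reflexive_relation_def by blast+
  have dq: "cdom C q0 = cdom C q1" using Q unfolding is_product_def by blast
  have mX: "ccod C m = X" using n Sd unfolding normal_to_def by simp
  obtain mt where mt: "hom C mt (cdom C q0) (cdom C d0)"
      "cmp C d0 mt = cmp C m q0" "cmp C d1 mt = cmp C m q1" "is_pullback C d0 m mt q0"
    using normal_to_product[OF n] Q by blast
  \<comment> \<open>(q0, \<delta>) is the pullback of the split epimorphism (d0, s0) along m\<close>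
  have "cmp C mt \<delta> = cmp C s0 m"
  proof (rule jointly_monicD[OF reflexive_relation_jointly_monic[OF rS]])
    have "cmp C d0 (cmp C mt \<delta>) = cmp C (cmp C m q0) \<delta>"
      using mt Q by (simp add: hom_def comp_assoc)
    also have "\<dots> = cmp C (cmp C d0 s0) m"
      using Q Sd mX by (simp add: hom_def comp_assoc[symmetric])
    finally show "cmp C d0 (cmp C mt \<delta>) = cmp C d0 (cmp C s0 m)"
      using Sd mX by (simp add: hom_def comp_assoc)
    have "cmp C d1 (cmp C mt \<delta>) = cmp C (cmp C m q1) \<delta>"
      using mt Q Sd by (simp add: hom_def comp_assoc)
    also have "\<dots> = cmp C (cmp C d1 s0) m"
      using Q Sd mX dq by (simp add: hom_def comp_assoc[symmetric])
    finally show "cmp C d1 (cmp C mt \<delta>) = cmp C d1 (cmp C s0 m)"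
      using Sd mX by (simp add: hom_def comp_assoc)
  qed (use mt Q Sd mX in \<open>auto simp: hom_def\<close>)
  then have "(q0, \<delta>) \<in> \<Sigma>"
    using fib[unfolded fibrational_def, THEN conjunct2, rule_format, of d0 s0 m mt q0 \<delta>]
      inS mX Sd mt Q by simp
  moreover have "reflexive_relation C (cdom C m) q0 q1 \<delta>"
    using product_diagonal_reflexive_relation Q by blast
  ultimately show "sigma_relation C \<Sigma> (cdom C m) q0 q1 \<delta>"
    unfolding sigma_relation_def by blast
qed

lemma relation_intersection:
  assumes fc: "finitely_complete C" and rS: "reflexive_relation C X d0 d1 s0"
    and rT: "reflexive_relation C X e0 e1 r0"
  shows "\<exists>a b. mono C a \<and> ccod C a = cdom C d0 \<and> hom C b (cdom C a) (cdom C e0) \<and>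
     cmp C d0 a = cmp C e0 b \<and> cmp C d1 a = cmp C e1 b \<and>
     (\<forall>z w. ccod C z = cdom C d0 \<and> ccod C w = cdom C e0 \<and> cdom C z = cdom C w \<and>
        cmp C d0 z = cmp C e0 w \<and> cmp C d1 z = cmp C e1 w \<longrightarrow>
        (\<exists>u. hom C u (cdom C z) (cdom C a) \<and> cmp C a u = z))"
proof -
  have Sd: "cdom C d0 = cdom C d1" "ccod C d0 = X" "ccod C d1 = X"
    using rS unfolding reflexive_relation_def by auto
  have Td: "cdom C e0 = cdom C e1" "ccod C e0 = X" "ccod C e1 = X"
    using rT unfolding reflexive_relation_def by auto
  obtain \<pi>0 \<pi>1 where \<pi>: "is_product C \<pi>0 \<pi>1" "ccod C \<pi>0 = X" "ccod C \<pi>1 = X"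
    using finitely_complete_has_products[OF fc] by blast
  have d\<pi>: "cdom C \<pi>0 = cdom C \<pi>1" using \<pi> unfolding is_product_def by auto
  obtain k where k: "hom C k (cdom C d0) (cdom C \<pi>0)" "cmp C \<pi>0 k = d0" "cmp C \<pi>1 k = d1"
    using product_pairing[OF \<pi>(1), of d0 d1] Sd \<pi> by auto
  obtain l where l: "hom C l (cdom C e0) (cdom C \<pi>0)" "cmp C \<pi>0 l = e0" "cmp C \<pi>1 l = e1"
    using product_pairing[OF \<pi>(1), of e0 e1] Td \<pi> by auto
  have "mono C l"
    by (rule product_pairing_mono[OF reflexive_relation_jointly_monic[OF rT] \<pi>(1) l])
  obtain a b where pb: "is_pullback C k l a b"
    using fc k l unfolding finitely_complete_def hom_def by metis
  have B: "ccod C a = cdom C d0" "ccod C b = cdom C e0" "cdom C a = cdom C b" "cmp C k a = cmp C l b"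
    using pb k l unfolding is_pullback_def hom_def by auto
  have "mono C a" by (rule pullback_mono[OF pb \<open>mono C l\<close>])
  moreover have "cmp C d0 a = cmp C e0 b" "cmp C d1 a = cmp C e1 b"
    using B k l d\<pi> by (metis comp_assoc hom_def)+
  moreover have "\<exists>u. hom C u (cdom C z) (cdom C a) \<and> cmp C a u = z"
    if H: "ccod C z = cdom C d0" "ccod C w = cdom C e0" "cdom C z = cdom C w"
      "cmp C d0 z = cmp C e0 w" "cmp C d1 z = cmp C e1 w" for z w
  proof -
    have "cmp C k z = cmp C l w"
      by (rule jointly_monicD[OF product_jointly_monic[OF \<pi>(1)]])
        (use H k l d\<pi> in \<open>auto simp: hom_def comp_assoc\<close>)
    then show ?thesis using pullback_factor[OF pb, of z w] H k l by (auto simp: hom_def)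
  qed
  ultimately show ?thesis
    using B by (intro exI[of _ a] exI[of _ b]) (simp add: hom_def)
qed

lemma normal_relation_le:
  assumes fc: "finitely_complete C"
    and rS: "reflexive_relation C X d0 d1 s0" and rT: "reflexive_relation C X e0 e1 r0"
    and ss: "strongly_split C d0 s0" and nS: "normal_to C m d0 d1" and nT: "normal_to C m e0 e1"
  shows "\<exists>\<phi>. hom C \<phi> (cdom C d0) (cdom C e0) \<and> cmp C e0 \<phi> = d0 \<and> cmp C e1 \<phi> = d1"
proof -
  have Sd: "cdom C d0 = cdom C d1" "ccod C d0 = X" "ccod C d1 = X" "hom C s0 X (cdom C d0)"
     "cmp C d0 s0 = idm C X" "cmp C d1 s0 = idm C X"
    using rS unfolding reflexive_relation_def by blast+
  have Td: "cdom C e0 = cdom C e1" "ccod C e0 = X" "ccod C e1 = X" "hom C r0 X (cdom C e0)"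
     "cmp C e0 r0 = idm C X" "cmp C e1 r0 = idm C X"
    using rT unfolding reflexive_relation_def by blast+
  obtain p0 p1 mt where p: "is_product C p0 p1" "ccod C p0 = cdom C m" "ccod C p1 = cdom C m"
    and mt: "hom C mt (cdom C p0) (cdom C d0)"
      "cmp C d0 mt = cmp C m p0" "cmp C d1 mt = cmp C m p1"
    and pb: "is_pullback C d0 m mt p0" and mX: "ccod C m = ccod C d0"
    using nS unfolding normal_to_def by blast
  obtain nt where nt: "hom C nt (cdom C p0) (cdom C e0)"
      "cmp C e0 nt = cmp C m p0" "cmp C e1 nt = cmp C m p1"
    using normal_to_product[OF nT p] by blast
  obtain a b where ab: "mono C a" "ccod C a = cdom C d0" "hom C b (cdom C a) (cdom C e0)"
     "cmp C d0 a = cmp C e0 b" "cmp C d1 a = cmp C e1 b"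
    and factor: "\<And>z w. ccod C z = cdom C d0 \<Longrightarrow> ccod C w = cdom C e0 \<Longrightarrow> cdom C z = cdom C w \<Longrightarrow>
        cmp C d0 z = cmp C e0 w \<Longrightarrow> cmp C d1 z = cmp C e1 w \<Longrightarrow>
        (\<exists>u. hom C u (cdom C z) (cdom C a) \<and> cmp C a u = z)"
    using relation_intersection[OF fc rS rT] by blast
  obtain u1 where u1: "hom C u1 (cdom C mt) (cdom C a)" "cmp C a u1 = mt"
    using factor[of mt nt] mt nt by (auto simp: hom_def)
  obtain u2 where u2: "hom C u2 (cdom C s0) (cdom C a)" "cmp C a u2 = s0"
    using factor[of s0 r0] Sd Td by (auto simp: hom_def)
  have jee: "jointly_extremally_epic C mt s0"
    using ss[unfolded strongly_split_def, rule_format, of m mt p0] mX pb by simp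
  have "iso C a"
    by (rule jee[unfolded jointly_extremally_epic_def, THEN conjunct2, rule_format, of a u1 u2])
      (use ab(1,2) u1 u2 mt(1) in \<open>simp add: hom_def\<close>)
  then obtain g where g: "hom C g (cdom C d0) (cdom C a)" "cmp C a g = idm C (cdom C d0)"
    unfolding iso_def using ab(2) by metis
  have "cmp C e0 (cmp C b g) = cmp C (cmp C d0 a) g"
    using g ab Td by (simp add: hom_def comp_assoc)
  also have "\<dots> = d0" using g ab(2) by (simp add: hom_def comp_assoc[symmetric])
  finally have e0: "cmp C e0 (cmp C b g) = d0" .
  have "cmp C e1 (cmp C b g) = cmp C (cmp C d1 a) g"
    using g ab Td by (simp add: hom_def comp_assoc)
  also have "\<dots> = d1" using g ab(2) Sd by (simp add: hom_def comp_assoc[symmetric])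
  finally have e1: "cmp C e1 (cmp C b g) = d1" .
  show ?thesis using e0 e1 g ab by (intro exI[of _ "cmp C b g"]) (simp add: hom_def)
qed

lemma relation_inclusions_iso:
  assumes rS: "reflexive_relation C X d0 d1 s0" and rT: "reflexive_relation C X e0 e1 r0"
    and \<phi>: "hom C \<phi> (cdom C d0) (cdom C e0)" "cmp C e0 \<phi> = d0" "cmp C e1 \<phi> = d1"
    and \<psi>: "hom C \<psi> (cdom C e0) (cdom C d0)" "cmp C d0 \<psi> = e0" "cmp C d1 \<psi> = e1"
  shows "iso C \<phi>"
proof -
  have Sd: "cdom C d0 = cdom C d1" and Td: "cdom C e0 = cdom C e1"
    using rS rT unfolding reflexive_relation_def by blast+
  have "cmp C \<psi> \<phi> = idm C (cdom C d0)"
  proof (rule jointly_monicD[OF reflexive_relation_jointly_monic[OF rS]])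
    show "cmp C d0 (cmp C \<psi> \<phi>) = cmp C d0 (idm C (cdom C d0))"
      using \<phi> \<psi> by (simp add: hom_def comp_assoc)
    show "cmp C d1 (cmp C \<psi> \<phi>) = cmp C d1 (idm C (cdom C d0))"
      using \<phi> \<psi> Sd by (simp add: hom_def comp_assoc)
  qed (use \<phi> \<psi> in \<open>simp_all add: hom_def\<close>)
  moreover have "cmp C \<phi> \<psi> = idm C (cdom C e0)"
  proof (rule jointly_monicD[OF reflexive_relation_jointly_monic[OF rT]])
    show "cmp C e0 (cmp C \<phi> \<psi>) = cmp C e0 (idm C (cdom C e0))"
      using \<phi> \<psi> by (simp add: hom_def comp_assoc)
    show "cmp C e1 (cmp C \<phi> \<psi>) = cmp C e1 (idm C (cdom C e0))"
      using \<phi> \<psi> Td by (simp add: hom_def comp_assoc)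
  qed (use \<phi> \<psi> in \<open>simp_all add: hom_def\<close>)
  ultimately show ?thesis
    unfolding iso_def using \<phi>(1) \<psi>(1) by (intro exI[of _ \<psi>]) (simp add: hom_def)
qed

end

theorem proposition8p5:
  fixes C :: "('o,'a) cat" and \<Sigma> :: "('a \<times> 'a) set"
  assumes "is_category C" and "finitely_complete C"
    and "class_of_split_epis C \<Sigma>" and "fibrational C \<Sigma>"
    and "sigma_maltsev C \<Sigma>"
  shows "(\<forall>X m d0 d1 s0. sigma_equivalence_relation C \<Sigma> X d0 d1 s0 \<and> normal_to C m d0 d1
            \<longrightarrow> sigma_special C \<Sigma> (cdom C m))
       \<and> (sigma_protomodular C \<Sigma> \<longrightarrow>
          (\<forall>X m d0 d1 s0 e0 e1 r0.
             sigma_equivalence_relation C \<Sigma> X d0 d1 s0 \<and>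
             sigma_equivalence_relation C \<Sigma> X e0 e1 r0 \<and>
             normal_to C m d0 d1 \<and> normal_to C m e0 e1
             \<longrightarrow> (\<exists>\<phi>. iso C \<phi> \<and> hom C \<phi> (cdom C d0) (cdom C e0) \<and>
                      cmp C e0 \<phi> = d0 \<and> cmp C e1 \<phi> = d1)))"
proof -
  interpret category C by unfold_locales (fact assms(1))
  show ?thesis
  proof (intro conjI allI impI)
    fix X m d0 d1 s0
    assume "sigma_equivalence_relation C \<Sigma> X d0 d1 s0 \<and> normal_to C m d0 d1"
    then show "sigma_special C \<Sigma> (cdom C m)"
      using normal_sigma_relation_special[OF assms(4)]
      unfolding sigma_equivalence_relation_def by blast
  next
    fix X m d0 d1 s0 e0 e1 r0
    assume pm: "sigma_protomodular C \<Sigma>"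
      and H: "sigma_equivalence_relation C \<Sigma> X d0 d1 s0 \<and>
        sigma_equivalence_relation C \<Sigma> X e0 e1 r0 \<and> normal_to C m d0 d1 \<and> normal_to C m e0 e1"
    then have rS: "reflexive_relation C X d0 d1 s0" and rT: "reflexive_relation C X e0 e1 r0"
      and ssS: "strongly_split C d0 s0" and ssT: "strongly_split C e0 r0"
      unfolding sigma_equivalence_relation_def sigma_relation_def sigma_protomodular_def by blast+
    obtain \<phi> where \<phi>: "hom C \<phi> (cdom C d0) (cdom C e0)" "cmp C e0 \<phi> = d0" "cmp C e1 \<phi> = d1"
      using normal_relation_le[OF assms(2) rS rT ssS] H by blast
    obtain \<psi> where \<psi>: "hom C \<psi> (cdom C e0) (cdom C d0)" "cmp C d0 \<psi> = e0" "cmp C d1 \<psi> = e1"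
      using normal_relation_le[OF assms(2) rT rS ssT] H by blast
    show "\<exists>\<phi>. iso C \<phi> \<and> hom C \<phi> (cdom C d0) (cdom C e0) \<and> cmp C e0 \<phi> = d0 \<and> cmp C e1 \<phi> = d1"
      using relation_inclusions_iso[OF rS rT \<phi> \<psi>] \<phi> by blast
  qed
qed

end
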